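(* Every rectangle whose side lengths are positive integers can be domed.
   Context: All equilateral triangles have unit edge length. A polyiamond is a polygon that is a union of unit equilateral triangles (glued edge to edge). For a convex polygon $P$, $P$ can be (deltahedrally) domed if there is a convex polyhedron that has $P$ as one face and all of whose other faces are convex polyiamonds; the union of these other faces is the dome, and $P$ is its base. *)

theory Defs
  imports "HOL-Analysis.Analysis"
begin

text \<open>Unit triangles of the triangular lattice spanned (from origin o) by unit
  vectors u, v enclosing an angle of 60 degrees: the "up" and "down" triangles
  with lattice coordinates (i, j).\<close>
definition lattice_triangle :: "real^3 \<Rightarrow> real^3 \<Rightarrow> real^3 \<Rightarrow> int \<Rightarrow> int \<Rightarrow> bool \<Rightarrow> (real^3) set" where
  "lattice_triangle o' u v i j up =
     (let p = (\<lambda>a b::int. o' + of_int a *\<^sub>R u + of_int b *\<^sub>R v) in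
      if up then convex hull {p i j, p (i+1) j, p i (j+1)}
      else convex hull {p (i+1) j, p i (j+1), p (i+1) (j+1)})"

text \<open>A polyiamond: a union of (finitely many, at least one) unit equilateral
  triangles glued edge to edge, i.e. cells of a triangular lattice with unit edge
  length in some plane of space.\<close>
definition polyiamond :: "(real^3) set \<Rightarrow> bool" where
  "polyiamond F \<longleftrightarrow>
     (\<exists>o' u v T. norm u = 1 \<and> norm v = 1 \<and> inner u v = 1/2 \<and>
        finite T \<and> T \<noteq> {} \<and>
        F = (\<Union>(i, j, up)\<in>T. lattice_triangle o' u v i j up))"

definition convex_polyiamond :: "(real^3) set \<Rightarrow> bool" where
  "convex_polyiamond F \<longleftrightarrow> convex F \<and> polyiamond F"

text \<open>A convex polyhedron in 3-space: a 3-dimensional polytope. Its faces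
  (in the sense of polygonal faces) are its facets.\<close>
definition convex_polyhedron :: "(real^3) set \<Rightarrow> bool" where
  "convex_polyhedron K \<longleftrightarrow> polytope K \<and> aff_dim K = 3"

definition can_be_domed :: "(real^3) set \<Rightarrow> bool" where
  "can_be_domed P \<longleftrightarrow>
     (\<exists>K. convex_polyhedron K \<and> P facet_of K \<and>
          (\<forall>F. F facet_of K \<and> F \<noteq> P \<longrightarrow> convex_polyiamond F))"

definition rectangle :: "(real^3) set \<Rightarrow> real \<Rightarrow> real \<Rightarrow> bool" where
  "rectangle P m n \<longleftrightarrow>
     (\<exists>a u v. norm u = 1 \<and> norm v = 1 \<and> inner u v = 0 \<and>
        P = convex hull {a, a + m *\<^sub>R u, a + n *\<^sub>R v, a + m *\<^sub>R u + n *\<^sub>R v})"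

end

theory Submission
  imports Defs
begin

text \<open>
  Let \<open>n \<le> m\<close>. Over the \<open>m \<times> n\<close> rectangle erect the hip roof all four of whose
  sloping faces make the angle \<open>arctan (sqrt 2)\<close> with the base, the angle at which the
  triangles of a half octahedron meet its square base. A unit triangular lattice then fits each
  sloping face with one lattice direction along the base edge: the two ends are equilateral
  triangles of side \<open>n\<close> and the two long sides are trapezoids with parallel sides \<open>m\<close>
  and \<open>m - n\<close> and legs \<open>n\<close>, so all four are convex polyiamonds. The roof is computed
  in coordinates in which heights are divided by \<open>sqrt 2\<close>, where it is cut out by five
  halfspaces with integral data, and then carried onto the rectangle by an injective linear map
  and a translation.
\<close>

lemma facet_of_affine_image_iff:
  fixes f :: "'a::euclidean_space \<Rightarrow> 'b::euclidean_space"
  assumes "linear f" "inj f"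
  shows "F facet_of (+) a ` f ` S \<longleftrightarrow> (\<exists>C. C facet_of S \<and> F = (+) a ` f ` C)"
proof -
  have image_iff: "(+) a ` f ` C facet_of (+) a ` f ` S \<longleftrightarrow> C facet_of S" for C
    using assms by (simp add: facet_of_def face_of_linear_image aff_dim_translation_eq)
  show ?thesis
  proof
    assume F: "F facet_of (+) a ` f ` S"
    then have "F \<subseteq> (+) a ` f ` S"
      by (rule facet_of_imp_subset)
    define C where "C = {x \<in> S. a + f x \<in> F}"
    have FC: "F = (+) a ` f ` C"
      using \<open>F \<subseteq> (+) a ` f ` S\<close> by (auto simp: C_def)
    have "C facet_of S"
      using F unfolding FC image_iff .
    with FC show "\<exists>C. C facet_of S \<and> F = (+) a ` f ` C"
      by blast
  qed (use image_iff in auto)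
qed

section \<open>Trapezoids in a triangular lattice\<close>

text \<open>For \<open>N \<le> M\<close>: the trapezoid with a base of length \<open>M\<close> along \<open>u\<close>, a top of length
  \<open>M - N\<close> and \<open>N\<close> rows of lattice triangles; a triangle when \<open>N = M\<close>.\<close>

definition lattice_trapezoid :: "real^3 \<Rightarrow> real^3 \<Rightarrow> real^3 \<Rightarrow> real \<Rightarrow> real \<Rightarrow> (real^3) set" where
  "lattice_trapezoid o' u v M N =
     {o' + \<alpha> *\<^sub>R u + \<beta> *\<^sub>R v | \<alpha> \<beta>. 0 \<le> \<alpha> \<and> 0 \<le> \<beta> \<and> \<beta> \<le> N \<and> \<alpha> + \<beta> \<le> M}"

text \<open>The lattice coordinates, relative to the corner \<open>(i, j)\<close>, of the points of
  \<open>lattice_triangle o' u v i j up\<close>.\<close>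

definition triangle_offset :: "bool \<Rightarrow> real \<Rightarrow> real \<Rightarrow> bool" where
  "triangle_offset up a b \<longleftrightarrow>
     (if up then 0 \<le> a \<and> 0 \<le> b \<and> a + b \<le> 1 else a \<le> 1 \<and> b \<le> 1 \<and> 1 \<le> a + b)"

definition trapezoid_cells :: "int \<Rightarrow> int \<Rightarrow> (int \<times> int \<times> bool) set" where
  "trapezoid_cells M N =
     {(i, j, up). 0 \<le> i \<and> 0 \<le> j \<and> j + 1 \<le> N \<and> i + j + (if up then 1 else 2) \<le> M}"

lemma finite_trapezoid_cells: "finite (trapezoid_cells M N)"
proof (rule finite_subset)
  show "trapezoid_cells M N \<subseteq> {0..M} \<times> {0..N} \<times> UNIV"
    by (auto simp: trapezoid_cells_def split: if_splits)
qed auto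

lemma trapezoid_coords_iff_cell:
  fixes \<alpha> \<beta> :: real and M N :: int
  assumes "1 \<le> N" "N \<le> M"
  shows "(0 \<le> \<alpha> \<and> 0 \<le> \<beta> \<and> \<beta> \<le> of_int N \<and> \<alpha> + \<beta> \<le> of_int M) \<longleftrightarrow>
    (\<exists>i j up a b. (i, j, up) \<in> trapezoid_cells M N \<and> triangle_offset up a b \<and>
                  \<alpha> = of_int i + a \<and> \<beta> = of_int j + b)"
proof
  assume "\<exists>i j up a b. (i, j, up) \<in> trapezoid_cells M N \<and> triangle_offset up a b \<and>
                  \<alpha> = of_int i + a \<and> \<beta> = of_int j + b"
  then obtain i j up a b where cell: "(i, j, up) \<in> trapezoid_cells M N" and "triangle_offset up a b"
    and "\<alpha> = of_int i + a" "\<beta> = of_int j + b"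
    by blast
  moreover have "0 \<le> i" "0 \<le> j" "j + 1 \<le> N" "i + j + (if up then 1 else 2) \<le> M"
    using cell by (auto simp: trapezoid_cells_def)
  ultimately show "0 \<le> \<alpha> \<and> 0 \<le> \<beta> \<and> \<beta> \<le> of_int N \<and> \<alpha> + \<beta> \<le> of_int M"
    by (cases up) (simp_all add: triangle_offset_def)
next
  assume coords: "0 \<le> \<alpha> \<and> 0 \<le> \<beta> \<and> \<beta> \<le> of_int N \<and> \<alpha> + \<beta> \<le> of_int M"
  define j where "j = min \<lfloor>\<beta>\<rfloor> (N - 1)"
  define i where "i = min \<lfloor>\<alpha>\<rfloor> (M - j - 1)"
  have j: "0 \<le> j" "j < N" "of_int j \<le> \<beta>" "\<beta> \<le> of_int j + 1"
    using coords assms unfolding j_def by linarith+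
  have i: "0 \<le> i" "i + j < M" "of_int i \<le> \<alpha>" "\<alpha> \<le> of_int i + 1"
    using coords assms j unfolding i_def by linarith+
  show "\<exists>i j up a b. (i, j, up) \<in> trapezoid_cells M N \<and> triangle_offset up a b \<and>
                  \<alpha> = of_int i + a \<and> \<beta> = of_int j + b"
  proof (cases "\<alpha> + \<beta> \<le> of_int i + of_int j + 1")
    case True
    with i j have "(i, j, True) \<in> trapezoid_cells M N" "triangle_offset True (\<alpha> - i) (\<beta> - j)"
      by (auto simp: trapezoid_cells_def triangle_offset_def)
    then show ?thesis by force
  next
    case False
    with i j coords have "(i, j, False) \<in> trapezoid_cells M N" "triangle_offset False (\<alpha> - i) (\<beta> - j)"
      by (auto simp: trapezoid_cells_def triangle_offset_def)
    then show ?thesis by force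
  qed
qed

lemma mem_lattice_triangle_iff:
  "x \<in> lattice_triangle o' u v i j up \<longleftrightarrow>
     (\<exists>a b. triangle_offset up a b \<and> x = o' + (of_int i + a) *\<^sub>R u + (of_int j + b) *\<^sub>R v)"
proof (cases up)
  case True
  then show ?thesis
    by (auto simp: lattice_triangle_def triangle_offset_def convex_hull_3_alt algebra_simps)
next
  case False
  let ?p = "\<lambda>a b::int. o' + of_int a *\<^sub>R u + of_int b *\<^sub>R v"
  have reflect: "(\<exists>s t. Q (1 - s) (1 - t)) \<longleftrightarrow> (\<exists>a b. Q a b)" for Q :: "real \<Rightarrow> real \<Rightarrow> bool"
  proof
    assume "\<exists>a b. Q a b"
    then obtain a b where "Q a b" by blast
    then show "\<exists>s t. Q (1 - s) (1 - t)" by (intro exI[of _ "1 - a"] exI[of _ "1 - b"]) simp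
  qed blast
  have "x \<in> lattice_triangle o' u v i j up \<longleftrightarrow>
      x \<in> convex hull {?p (i+1) (j+1), ?p i (j+1), ?p (i+1) j}"
    using False by (simp add: lattice_triangle_def insert_commute)
  also have "\<dots> \<longleftrightarrow> (\<exists>s t. 1 - s \<le> 1 \<and> 1 - t \<le> 1 \<and> 1 \<le> (1 - s) + (1 - t) \<and>
      x = o' + (of_int i + (1 - s)) *\<^sub>R u + (of_int j + (1 - t)) *\<^sub>R v)"
    by (auto simp: convex_hull_3_alt algebra_simps)
  also have "\<dots> \<longleftrightarrow> (\<exists>a b. a \<le> 1 \<and> b \<le> 1 \<and> 1 \<le> a + b \<and>
      x = o' + (of_int i + a) *\<^sub>R u + (of_int j + b) *\<^sub>R v)"
    by (rule reflect)
  finally show ?thesis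
    using False by (simp add: triangle_offset_def)
qed

lemma lattice_trapezoid_eq_Union_cells:
  assumes "1 \<le> N" "N \<le> M"
  shows "lattice_trapezoid o' u v (of_int M) (of_int N) =
    (\<Union>(i, j, up)\<in>trapezoid_cells M N. lattice_triangle o' u v i j up)"
proof (rule set_eqI)
  fix x
  let ?p = "\<lambda>\<alpha> \<beta>. o' + \<alpha> *\<^sub>R u + \<beta> *\<^sub>R v"
  have "x \<in> lattice_trapezoid o' u v (of_int M) (of_int N) \<longleftrightarrow>
      (\<exists>\<alpha> \<beta>. (0 \<le> \<alpha> \<and> 0 \<le> \<beta> \<and> \<beta> \<le> of_int N \<and> \<alpha> + \<beta> \<le> of_int M) \<and> x = ?p \<alpha> \<beta>)"
    by (auto simp: lattice_trapezoid_def)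
  also have "\<dots> \<longleftrightarrow> (\<exists>\<alpha> \<beta>. (\<exists>i j up a b. (i, j, up) \<in> trapezoid_cells M N \<and>
      triangle_offset up a b \<and> \<alpha> = of_int i + a \<and> \<beta> = of_int j + b) \<and> x = ?p \<alpha> \<beta>)"
    by (simp only: trapezoid_coords_iff_cell[OF assms])
  also have "\<dots> \<longleftrightarrow> (\<exists>(i, j, up) \<in> trapezoid_cells M N.
      \<exists>a b. triangle_offset up a b \<and> x = ?p (of_int i + a) (of_int j + b))"
    by blast
  also have "\<dots> \<longleftrightarrow> x \<in> (\<Union>(i, j, up)\<in>trapezoid_cells M N. lattice_triangle o' u v i j up)"
    by (simp add: mem_lattice_triangle_iff split_beta)
  finally show "x \<in> lattice_trapezoid o' u v (of_int M) (of_int N) \<longleftrightarrow>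
      x \<in> (\<Union>(i, j, up)\<in>trapezoid_cells M N. lattice_triangle o' u v i j up)" .
qed

lemma polyiamond_lattice_trapezoid:
  assumes "norm u = 1" "norm v = 1" "u \<bullet> v = 1/2" "1 \<le> N" "N \<le> M"
  shows "polyiamond (lattice_trapezoid o' u v (of_int M) (of_int N))"
proof -
  have "(0, 0, True) \<in> trapezoid_cells M N"
    using assms by (simp add: trapezoid_cells_def)
  then show ?thesis
    unfolding polyiamond_def lattice_trapezoid_eq_Union_cells[OF assms(4,5)]
    using assms(1-3) finite_trapezoid_cells by blast
qed

lemma lattice_trapezoid_affine_image:
  assumes "linear f"
  shows "(+) a ` f ` lattice_trapezoid o' u v M N = lattice_trapezoid (a + f o') (f u) (f v) M N"
proof -
  have image: "a + f (o' + \<alpha> *\<^sub>R u + \<beta> *\<^sub>R v) = (a + f o') + \<alpha> *\<^sub>R f u + \<beta> *\<^sub>R f v" for \<alpha> \<beta>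
    using assms by (simp add: linear_add linear_scale add.assoc)
  show ?thesis
  proof (intro equalityI subsetI)
    fix x assume "x \<in> (+) a ` f ` lattice_trapezoid o' u v M N"
    then obtain \<alpha> \<beta> where "x = a + f (o' + \<alpha> *\<^sub>R u + \<beta> *\<^sub>R v)"
      and "0 \<le> \<alpha> \<and> 0 \<le> \<beta> \<and> \<beta> \<le> N \<and> \<alpha> + \<beta> \<le> M"
      by (auto simp: lattice_trapezoid_def)
    then show "x \<in> lattice_trapezoid (a + f o') (f u) (f v) M N"
      unfolding image lattice_trapezoid_def by blast
  next
    fix x assume "x \<in> lattice_trapezoid (a + f o') (f u) (f v) M N"
    then obtain \<alpha> \<beta> where "x = a + f (o' + \<alpha> *\<^sub>R u + \<beta> *\<^sub>R v)"
      and "0 \<le> \<alpha> \<and> 0 \<le> \<beta> \<and> \<beta> \<le> N \<and> \<alpha> + \<beta> \<le> M"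
      by (auto simp: lattice_trapezoid_def image simp del: add.assoc)
    then show "x \<in> (+) a ` f ` lattice_trapezoid o' u v M N"
      by (auto simp: lattice_trapezoid_def)
  qed
qed

section \<open>The hip roof\<close>

text \<open>In roof coordinates the base is \<open>[0, m] \<times> [0, n] \<times> {0}\<close> and the true height of a
  point \<open>x\<close> is \<open>sqrt 2 * x$3\<close> (see \<open>roof_frame\<close>). \<open>Front\<close> and \<open>Back\<close> are the long
  sloping faces, \<open>Left_End\<close> and \<open>Right_End\<close> the triangular ends.\<close>

datatype roof_facet = Base | Front | Back | Left_End | Right_End

lemma UNIV_roof_facet: "UNIV = {Base, Front, Back, Left_End, Right_End}"
  using roof_facet.exhaust by auto

fun roof_normal :: "roof_facet \<Rightarrow> real^3" where
  "roof_normal Base = vector [0, 0, -1]"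
| "roof_normal Front = vector [0, -1, 1]"
| "roof_normal Back = vector [0, 1, 1]"
| "roof_normal Left_End = vector [-1, 0, 1]"
| "roof_normal Right_End = vector [1, 0, 1]"

fun roof_offset :: "real \<Rightarrow> real \<Rightarrow> roof_facet \<Rightarrow> real" where
  "roof_offset m n Back = n"
| "roof_offset m n Right_End = m"
| "roof_offset m n _ = 0"

definition roof_halfspace :: "real \<Rightarrow> real \<Rightarrow> roof_facet \<Rightarrow> (real^3) set" where
  "roof_halfspace m n s = {x. roof_normal s \<bullet> x \<le> roof_offset m n s}"

definition hip_roof :: "real \<Rightarrow> real \<Rightarrow> (real^3) set" where
  "hip_roof m n = (\<Inter>s. roof_halfspace m n s)"

definition roof_face :: "real \<Rightarrow> real \<Rightarrow> roof_facet \<Rightarrow> (real^3) set" where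
  "roof_face m n s = hip_roof m n \<inter> {x. roof_normal s \<bullet> x = roof_offset m n s}"

lemma inner_vector_3: "vector [p, q, r] \<bullet> (x :: real^3) = p * x$1 + q * x$2 + r * x$3"
  by (simp add: inner_vec_def sum_3)

lemma roof_normal_nonzero: "roof_normal s \<noteq> 0"
  by (cases s) (auto simp: vec_eq_iff forall_3)

lemma mem_hip_roof_iff:
  "x \<in> hip_roof m n \<longleftrightarrow> 0 \<le> x$3 \<and> x$3 \<le> x$2 \<and> x$2 + x$3 \<le> n \<and> x$3 \<le> x$1 \<and> x$1 + x$3 \<le> m"
  by (auto simp: hip_roof_def roof_halfspace_def UNIV_roof_facet inner_vector_3)

fun roof_witness :: "real \<Rightarrow> real \<Rightarrow> roof_facet \<Rightarrow> real^3" where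
  "roof_witness m n Base = vector [m/2, n/2, -1]"
| "roof_witness m n Front = vector [m/2, -1, 0]"
| "roof_witness m n Back = vector [m/2, n + 1, 0]"
| "roof_witness m n Left_End = vector [-1, n/2, 0]"
| "roof_witness m n Right_End = vector [m + 1, n/2, 0]"

lemma roof_witness_mem_halfspace_iff:
  assumes "0 < n" "n \<le> m"
  shows "roof_witness m n s \<in> roof_halfspace m n s' \<longleftrightarrow> s \<noteq> s'"
  using assms by (cases s; cases s') (auto simp: roof_halfspace_def inner_vector_3)

lemma interior_hip_roof:
  "interior (hip_roof m n) = (\<Inter>s. {x. roof_normal s \<bullet> x < roof_offset m n s})"
  by (simp add: hip_roof_def roof_halfspace_def UNIV_roof_facet roof_normal_nonzero
      del: roof_normal.simps)

lemma interior_hip_roof_nonempty: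
  assumes "0 < n" "n \<le> m"
  shows "interior (hip_roof m n) \<noteq> {}"
proof -
  have "vector [m/2, n/2, n/8] \<in> interior (hip_roof m n)"
    using assms by (simp add: interior_hip_roof UNIV_roof_facet inner_vector_3)
  then show ?thesis by blast
qed

lemma polytope_hip_roof: "polytope (hip_roof m n)"
proof -
  have "polyhedron (hip_roof m n)"
    unfolding hip_roof_def roof_halfspace_def
    by (intro polyhedron_Inter) (auto simp: UNIV_roof_facet polyhedron_halfspace_le)
  moreover have "norm x \<le> \<bar>m\<bar> + \<bar>n\<bar> + \<bar>n\<bar>" if "x \<in> hip_roof m n" for x
  proof -
    have "norm x \<le> \<bar>x$1\<bar> + \<bar>x$2\<bar> + \<bar>x$3\<bar>"
      using norm_le_l1_cart[of x] by (simp add: sum_3)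
    then show ?thesis
      using that by (auto simp: mem_hip_roof_iff)
  qed
  then have "bounded (hip_roof m n)"
    unfolding bounded_iff by blast
  ultimately show ?thesis
    by (simp add: polytope_eq_bounded_polyhedron)
qed

lemma facet_of_hip_roof_iff:
  assumes "0 < n" "n \<le> m"
  shows "F facet_of hip_roof m n \<longleftrightarrow> (\<exists>s. F = roof_face m n s)"
proof -
  have inj: "inj (roof_halfspace m n)"
    by (metis injI roof_witness_mem_halfspace_iff[OF assms])
  define side where "side h = inv (roof_halfspace m n) h" for h
  have side: "side (roof_halfspace m n s) = s" for s
    using inj by (simp add: side_def)
  have halfspace: "roof_normal (side h) \<noteq> 0 \<and>
      h = {x. roof_normal (side h) \<bullet> x \<le> roof_offset m n (side h)}"
    if "h \<in> range (roof_halfspace m n)" for h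
  proof -
    obtain s where h: "h = roof_halfspace m n s"
      using \<open>h \<in> range (roof_halfspace m n)\<close> by blast
    then have "side h = s"
      by (simp add: side)
    with h show ?thesis
      by (simp add: roof_normal_nonzero roof_halfspace_def del: roof_normal.simps)
  qed
  have aff: "affine hull hip_roof m n = UNIV"
    using affine_hull_nonempty_interior interior_hip_roof_nonempty[OF assms] by blast
  have irredundant: "hip_roof m n \<subset> affine hull hip_roof m n \<inter> \<Inter>H"
    if H: "H \<subset> range (roof_halfspace m n)" for H
  proof -
    obtain s where "roof_halfspace m n s \<notin> H"
      using H by blast
    then have "roof_witness m n s \<in> \<Inter>H" "roof_witness m n s \<notin> hip_roof m n"
      using H roof_witness_mem_halfspace_iff[OF assms] by (auto simp: hip_roof_def)
    moreover have "hip_roof m n \<subseteq> \<Inter>H"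
      using H by (auto simp: hip_roof_def)
    ultimately show ?thesis
      unfolding aff by blast
  qed
  have seq: "hip_roof m n = affine hull hip_roof m n \<inter> \<Inter>(range (roof_halfspace m n))"
    unfolding aff by (simp add: hip_roof_def)
  have "F facet_of hip_roof m n \<longleftrightarrow> (\<exists>h. h \<in> range (roof_halfspace m n) \<and>
      F = hip_roof m n \<inter> {x. roof_normal (side h) \<bullet> x = roof_offset m n (side h)})"
    by (rule facet_of_polyhedron_explicit[OF _ seq halfspace irredundant])
      (simp add: UNIV_roof_facet)
  then show ?thesis
    by (simp add: side roof_face_def)
qed

lemma roof_face_Base:
  assumes "0 < m" "0 < n"
  shows "roof_face m n Base = convex hull {0, vector [m, 0, 0], vector [0, n, 0], vector [m, n, 0]}"
    (is "_ = convex hull ?V")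
proof
  have "convex (roof_face m n Base)"
    unfolding roof_face_def hip_roof_def roof_halfspace_def
    by (intro convex_Int convex_INT convex_halfspace_le convex_hyperplane)
  moreover have "?V \<subseteq> roof_face m n Base"
    using assms by (auto simp: roof_face_def mem_hip_roof_iff inner_vector_3)
  ultimately show "convex hull ?V \<subseteq> roof_face m n Base"
    by (rule hull_minimal[rotated])
next
  show "roof_face m n Base \<subseteq> convex hull ?V"
  proof
    fix x assume "x \<in> roof_face m n Base"
    then have x: "x$3 = 0" "0 \<le> x$1" "x$1 \<le> m" "0 \<le> x$2" "x$2 \<le> n"
      by (auto simp: roof_face_def mem_hip_roof_iff inner_vector_3)
    have "vector [x$1, 0, 0] \<in> closed_segment 0 (vector [m, 0, 0] :: real^3)"
      unfolding closed_segment_def using x assms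
      by (auto intro!: exI[of _ "x$1 / m"] simp: vec_eq_iff forall_3)
    also have "\<dots> \<subseteq> convex hull ?V"
      by (rule closed_segment_subset) (auto intro: hull_inc)
    finally have bottom: "vector [x$1, 0, 0] \<in> convex hull ?V" .
    have "vector [x$1, n, 0] \<in> closed_segment (vector [0, n, 0]) (vector [m, n, 0] :: real^3)"
      unfolding closed_segment_def using x assms
      by (auto intro!: exI[of _ "x$1 / m"] simp: vec_eq_iff forall_3 field_simps)
    also have "\<dots> \<subseteq> convex hull ?V"
      by (rule closed_segment_subset) (auto intro: hull_inc)
    finally have top: "vector [x$1, n, 0] \<in> convex hull ?V" .
    have "x \<in> closed_segment (vector [x$1, 0, 0]) (vector [x$1, n, 0])"
      unfolding closed_segment_def using x assms
      by (auto intro!: exI[of _ "x$2 / n"] simp: vec_eq_iff forall_3 field_simps)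
    also have "\<dots> \<subseteq> convex hull ?V"
      using bottom top by (rule closed_segment_subset) simp
    finally show "x \<in> convex hull ?V" .
  qed
qed

lemma roof_face_Front:
  "roof_face m n Front = lattice_trapezoid 0 (vector [1, 0, 0]) (vector [1/2, 1/2, 1/2]) m n"
proof (intro equalityI subsetI)
  fix x assume "x \<in> roof_face m n Front"
  then show "x \<in> lattice_trapezoid 0 (vector [1, 0, 0]) (vector [1/2, 1/2, 1/2]) m n"
    unfolding lattice_trapezoid_def
    by (intro CollectI exI[of _ "x$1 - x$3"] exI[of _ "2 * x$3"])
      (auto simp: roof_face_def mem_hip_roof_iff inner_vector_3 vec_eq_iff forall_3)
qed (auto simp: lattice_trapezoid_def roof_face_def mem_hip_roof_iff inner_vector_3)

lemma roof_face_Back: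
  "roof_face m n Back =
    lattice_trapezoid (vector [0, n, 0]) (vector [1, 0, 0]) (vector [1/2, -1/2, 1/2]) m n"
proof (intro equalityI subsetI)
  fix x assume "x \<in> roof_face m n Back"
  then show
    "x \<in> lattice_trapezoid (vector [0, n, 0]) (vector [1, 0, 0]) (vector [1/2, -1/2, 1/2]) m n"
    unfolding lattice_trapezoid_def
    by (intro CollectI exI[of _ "x$1 - x$3"] exI[of _ "2 * x$3"])
      (auto simp: roof_face_def mem_hip_roof_iff inner_vector_3 vec_eq_iff forall_3)
qed (auto simp: lattice_trapezoid_def roof_face_def mem_hip_roof_iff inner_vector_3)

lemma roof_face_Left_End:
  assumes "n \<le> m"
  shows "roof_face m n Left_End = lattice_trapezoid 0 (vector [0, 1, 0]) (vector [1/2, 1/2, 1/2]) n n"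
proof (intro equalityI subsetI)
  fix x assume "x \<in> roof_face m n Left_End"
  then show "x \<in> lattice_trapezoid 0 (vector [0, 1, 0]) (vector [1/2, 1/2, 1/2]) n n"
    unfolding lattice_trapezoid_def
    by (intro CollectI exI[of _ "x$2 - x$3"] exI[of _ "2 * x$3"])
      (auto simp: roof_face_def mem_hip_roof_iff inner_vector_3 vec_eq_iff forall_3)
qed (use assms in \<open>auto simp: lattice_trapezoid_def roof_face_def mem_hip_roof_iff inner_vector_3\<close>)

lemma roof_face_Right_End:
  assumes "n \<le> m"
  shows "roof_face m n Right_End =
    lattice_trapezoid (vector [m, 0, 0]) (vector [0, 1, 0]) (vector [-1/2, 1/2, 1/2]) n n"
proof (intro equalityI subsetI)
  fix x assume "x \<in> roof_face m n Right_End"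
  then show
    "x \<in> lattice_trapezoid (vector [m, 0, 0]) (vector [0, 1, 0]) (vector [-1/2, 1/2, 1/2]) n n"
    unfolding lattice_trapezoid_def
    by (intro CollectI exI[of _ "x$2 - x$3"] exI[of _ "2 * x$3"])
      (auto simp: roof_face_def mem_hip_roof_iff inner_vector_3 vec_eq_iff forall_3)
qed (use assms in \<open>auto simp: lattice_trapezoid_def roof_face_def mem_hip_roof_iff inner_vector_3\<close>)

section \<open>Placing the roof over the rectangle\<close>

definition roof_frame :: "real^3 \<Rightarrow> real^3 \<Rightarrow> real^3 \<Rightarrow> real^3" where
  "roof_frame u v x = x$1 *\<^sub>R u + x$2 *\<^sub>R v + (sqrt 2 * x$3) *\<^sub>R cross3 u v"

lemma linear_roof_frame: "linear (roof_frame u v)"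
  unfolding roof_frame_def by (rule linearI) (simp_all add: algebra_simps)

definition roof_inner :: "real^3 \<Rightarrow> real^3 \<Rightarrow> real" where
  "roof_inner x y = x$1 * y$1 + x$2 * y$2 + 2 * (x$3 * y$3)"

lemma inner_roof_frame:
  assumes "norm u = 1" "norm v = 1" "u \<bullet> v = 0"
  shows "roof_frame u v x \<bullet> roof_frame u v y = roof_inner x y"
proof -
  have "(norm (cross3 u v))\<^sup>2 = 1"
    using assms by (simp add: norm_cross)
  then have "cross3 u v \<bullet> cross3 u v = 1"
    by (simp add: power2_norm_eq_inner)
  moreover have "u \<bullet> u = 1" "v \<bullet> v = 1"
    using assms by (simp_all add: dot_square_norm)
  moreover have "u \<bullet> cross3 u v = 0" "v \<bullet> cross3 u v = 0"
    by (simp_all add: dot_cross_self(1) dot_cross_self(3)[of u v, unfolded inner_commute[of _ v]])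
  ultimately show ?thesis
    using assms(3)
    by (simp add: roof_frame_def roof_inner_def inner_add_left inner_add_right inner_commute
        algebra_simps)
qed

lemma inj_roof_frame:
  assumes "norm u = 1" "norm v = 1" "u \<bullet> v = 0"
  shows "inj (roof_frame u v)"
  unfolding linear_inj_iff_eq_0[OF linear_roof_frame]
proof (intro allI impI)
  fix x assume "roof_frame u v x = 0"
  then have "x$1 * x$1 + x$2 * x$2 + 2 * (x$3 * x$3) = 0"
    using inner_roof_frame[OF assms, of x x] by (simp add: roof_inner_def)
  then have "x$1 * x$1 = 0" "x$2 * x$2 = 0" "x$3 * x$3 = 0"
    using zero_le_square[of "x$1"] zero_le_square[of "x$2"] zero_le_square[of "x$3"] by linarith+
  then show "x = 0"
    by (simp add: vec_eq_iff forall_3)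
qed

lemma roof_face_lattice_trapezoid:
  fixes m n :: nat
  assumes "0 < n" "n \<le> m" "s \<noteq> Base"
  obtains o' p q M N where
    "roof_face m n s = lattice_trapezoid o' p q (of_int M) (of_int N)"
    "roof_inner p p = 1" "roof_inner q q = 1" "roof_inner p q = 1/2" "1 \<le> N" "N \<le> M"
proof (cases s)
  case Front
  then show ?thesis
    using assms roof_face_Front
    by (intro that[of _ _ _ "int m" "int n"]) (auto simp: roof_inner_def)
next
  case Back
  then show ?thesis
    using assms roof_face_Back
    by (intro that[of _ _ _ "int m" "int n"]) (auto simp: roof_inner_def)
next
  case Left_End
  then show ?thesis
    using assms roof_face_Left_End
    by (intro that[of _ _ _ "int n" "int n"]) (auto simp: roof_inner_def)
next
  case Right_End
  then show ?thesis
    using assms roof_face_Right_End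
    by (intro that[of _ _ _ "int n" "int n"]) (auto simp: roof_inner_def)
qed (use assms in simp)

lemma polyiamond_roof_face_image:
  fixes m n :: nat
  assumes "0 < n" "n \<le> m" "norm u = 1" "norm v = 1" "u \<bullet> v = 0" "s \<noteq> Base"
  shows "polyiamond ((+) a ` roof_frame u v ` roof_face m n s)"
proof -
  obtain o' p q M N where face: "roof_face m n s = lattice_trapezoid o' p q (of_int M) (of_int N)"
    and metric: "roof_inner p p = 1" "roof_inner q q = 1" "roof_inner p q = 1/2"
    and MN: "1 \<le> N" "N \<le> M"
    using roof_face_lattice_trapezoid[OF assms(1,2,6)] by blast
  let ?f = "roof_frame u v"
  have "polyiamond (lattice_trapezoid (a + ?f o') (?f p) (?f q) (of_int M) (of_int N))"
    using metric MN
    by (intro polyiamond_lattice_trapezoid)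
      (simp_all add: norm_eq_sqrt_inner inner_roof_frame[OF assms(3-5)])
  then show ?thesis
    by (simp add: face lattice_trapezoid_affine_image[OF linear_roof_frame])
qed

lemma can_be_domed_rectangle:
  fixes m n :: nat
  assumes "0 < n" "n \<le> m" "norm u = 1" "norm v = 1" "u \<bullet> v = 0"
  shows "can_be_domed
    (convex hull {a, a + real m *\<^sub>R u, a + real n *\<^sub>R v, a + real m *\<^sub>R u + real n *\<^sub>R v})"
    (is "can_be_domed ?P")
proof -
  let ?f = "roof_frame u v"
  let ?g = "\<lambda>X. (+) a ` ?f ` X"
  have lin: "linear ?f" and inj: "inj ?f"
    using linear_roof_frame inj_roof_frame[OF assms(3-5)] .
  have mn: "0 < real n" "real n \<le> real m"
    using assms by simp_all
  have facets: "F facet_of ?g (hip_roof m n) \<longleftrightarrow> (\<exists>s. F = ?g (roof_face m n s))" for F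
    unfolding facet_of_affine_image_iff[OF lin inj] facet_of_hip_roof_iff[OF mn] by blast
  then have facet: "?g (roof_face m n s) facet_of ?g (hip_roof m n)" for s
    by blast
  have polyhedron: "convex_polyhedron (?g (hip_roof m n))"
    using polytope_linear_image[OF lin polytope_hip_roof]
      aff_dim_nonempty_interior[OF interior_hip_roof_nonempty[OF mn]]
    by (simp add: convex_polyhedron_def polytope_translation_eq aff_dim_translation_eq lin inj)
  have base: "?P = ?g (roof_face m n Base)"
    using mn
    by (simp add: roof_face_Base convex_hull_linear_image[OF lin] flip: convex_hull_translation)
      (simp add: roof_frame_def add.assoc)
  have roof: "convex_polyiamond (?g (roof_face m n s))" if "s \<noteq> Base" for s
    using polyiamond_roof_face_image[OF assms that] face_of_imp_convex[OF facet_of_imp_face_of[OF facet]]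
    by (simp add: convex_polyiamond_def)
  have "convex_polyiamond F" if F: "F facet_of ?g (hip_roof m n)" "F \<noteq> ?P" for F
  proof -
    obtain s where s: "F = ?g (roof_face m n s)"
      using F(1) facets by blast
    with F(2) base have "s \<noteq> Base"
      by blast
    with s roof show ?thesis
      by blast
  qed
  then show ?thesis
    unfolding can_be_domed_def using polyhedron facet[of Base] base by metis
qed

theorem lemma1:
  fixes P :: "(real^3) set" and m n :: nat
  assumes "m > 0" and "n > 0" and "rectangle P (real m) (real n)"
  shows "can_be_domed P"
proof -
  obtain a u v where uv: "norm u = 1" "norm v = 1" "u \<bullet> v = 0"
    and P: "P = convex hull {a, a + real m *\<^sub>R u, a + real n *\<^sub>R v, a + real m *\<^sub>R u + real n *\<^sub>R v}"
    using assms(3) unfolding rectangle_def by blast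
  show ?thesis
  proof (cases "n \<le> m")
    case True
    then show ?thesis
      using can_be_domed_rectangle[of n m u v a] assms uv P by simp
  next
    case False
    have "P = convex hull {a, a + real n *\<^sub>R v, a + real m *\<^sub>R u, a + real n *\<^sub>R v + real m *\<^sub>R u}"
      using P by (simp add: insert_commute add_ac)
    then show ?thesis
      using can_be_domed_rectangle[of m n v u a] assms uv False by (simp add: inner_commute)
  qed
qed

end
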